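(* Let $k$ be a nonperfect field of characteristic $2$, let $a\in k\setminus k^2$, let $G_1=G_2=PGL_2$, and let $f:G_1\to G_2$ be the Frobenius isogeny (squaring matrix entries). Let $h_1=\overline{\begin{pmatrix}0&a\\1&0\end{pmatrix}}$ and $H_1=\langle h_1\rangle$. Then $H_1$ is $G_1$-irreducible over $k$, but $f(H_1)=\left\langle\overline{\begin{pmatrix}0&a^2\\1&0\end{pmatrix}}\right\rangle$ is not $G_2$-completely reducible over $k$. (Thus part (1) of the statement "central $k$-isogenies preserve complete reducibility over $k$" fails without centrality.)
   Context: $\bar A$ denotes the image in $PGL_2$ of $A\in GL_2$. For a connected reductive $k$-group $G$, a closed subgroup $H$ is $G$-completely reducible over $k$ if whenever $H$ is contained in a $k$-parabolic subgroup $P$ of $G$, $H$ is contained in some $k$-Levi subgroup of $P$; $H$ is $G$-irreducible over $k$ if it lies in no proper $k$-parabolic subgroup. *)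

theory Defs
  imports "HOL-Analysis.Analysis"
begin

type_synonym 'a mat22 = "'a^2^2"

text \<open>Concrete model of PGL_2 over a field k, via its group of k-points
  GL_2(k)/k^*.  Elements of PGL_2(k) are classes of invertible 2x2 matrices
  modulo nonzero scalars.\<close>

definition mat2 :: "'a::zero \<Rightarrow> 'a \<Rightarrow> 'a \<Rightarrow> 'a \<Rightarrow> 'a^2^2" where
  "mat2 p q r s = (\<chi> i j. if i = 1 then (if j = 1 then p else q) else (if j = 1 then r else s))"

definition gl2 :: "('a::field) mat22 set" where
  "gl2 = {A. det A \<noteq> 0}"

definition pcls :: "('a::field)^2^2 \<Rightarrow> 'a mat22 set" where
  "pcls A = {B. det B \<noteq> 0 \<and> (\<exists>c. c \<noteq> 0 \<and> B = mat c ** A)}"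

definition PGL2 :: "('a::field) mat22 set set" where
  "PGL2 = pcls ` gl2"

fun mpow :: "('a::field)^2^2 \<Rightarrow> nat \<Rightarrow> 'a^2^2" where
  "mpow A 0 = mat 1"
| "mpow A (Suc n) = A ** mpow A n"

definition cyc :: "('a::field)^2^2 \<Rightarrow> 'a mat22 set set" where
  "cyc A = {pcls (mpow A n) | n. True} \<union> {pcls (mpow (matrix_inv A) n) | n. True}"

definition stab :: "('a::field)^2 \<Rightarrow> 'a mat22 set set" where
  "stab v = {X \<in> PGL2. \<exists>A\<in>X. \<exists>c. A *v v = c *s v}"

text \<open>k-parabolic subgroups of PGL_2: PGL_2 itself, or a k-Borel subgroup,
  i.e. the stabilizer of a k-rational line.\<close>
definition kparabolic :: "('a::field) mat22 set set \<Rightarrow> bool" where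
  "kparabolic P \<longleftrightarrow> P = PGL2 \<or> (\<exists>v. v \<noteq> 0 \<and> P = stab v)"

text \<open>k-Levi subgroups of a k-parabolic P: for P = PGL_2 it is PGL_2; for
  the Borel stabilizing the line kv it is the maximal k-torus stabilizing kv
  and a complementary k-rational line kw.\<close>
definition klevi :: "('a::field) mat22 set set \<Rightarrow> 'a mat22 set set \<Rightarrow> bool" where
  "klevi P L \<longleftrightarrow> (P = PGL2 \<and> L = PGL2) \<or>
     (\<exists>v w. v \<noteq> 0 \<and> P = stab v \<and> w \<noteq> 0 \<and> (\<forall>c. w \<noteq> c *s v) \<and> L = stab v \<inter> stab w)"

definition gcr_over_k :: "('a::field) mat22 set set \<Rightarrow> bool" where
  "gcr_over_k H \<longleftrightarrow> (\<forall>P. kparabolic P \<and> H \<subseteq> P \<longrightarrow> (\<exists>L. klevi P L \<and> H \<subseteq> L))"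

definition girr_over_k :: "('a::field) mat22 set set \<Rightarrow> bool" where
  "girr_over_k H \<longleftrightarrow> \<not> (\<exists>P. kparabolic P \<and> P \<noteq> PGL2 \<and> H \<subseteq> P)"

definition frobm :: "('a::field)^2^2 \<Rightarrow> 'a^2^2" where
  "frobm A = (\<chi> i j. (A $ i $ j)^2)"

definition frobP :: "('a::field) mat22 set \<Rightarrow> 'a mat22 set" where
  "frobP X = pcls (frobm (SOME A. A \<in> X))"

end

theory Submission
  imports Defs
begin

text \<open>Since \<open>h\<^sub>1\<^sup>2\<close> is the scalar \<open>a\<close>, the group \<open>H\<^sub>1\<close> has the two elements
  \<open>1, h\<^sub>1\<close>, and likewise its Frobenius image is \<open>{1, h\<^sub>2}\<close> with
  \<open>h\<^sub>2 = (0, a\<^sup>2; 1, 0)\<close>.  A line \<open>k(x, y)\<close> is \<open>h\<close>-stable for \<open>h = (0, b; 1, 0)\<close>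
  iff \<open>x = c y\<close>, \<open>y \<noteq> 0\<close> and \<open>b = c\<^sup>2\<close> for some \<open>c\<close>.  For \<open>b = a\<close> there is no
  such line, so \<open>H\<^sub>1\<close> lies in no Borel subgroup.  For \<open>b = a\<^sup>2\<close> in
  characteristic 2 the only square root of \<open>a\<^sup>2\<close> is \<open>a\<close>, so \<open>h\<^sub>2\<close> stabilises
  exactly one line \<open>k(a, 1)\<close>: its image lies in the corresponding Borel
  subgroup but in none of its Levi subgroups, which would need a second
  stable line.\<close>

lemmas mat22_simps = vec_eq_iff forall_2 sum_2 matrix_matrix_mult_def
  matrix_vector_mult_def mat_def mat2_def det_2

lemma mat_mult_nth: "(mat c ** A) $ i $ j = c * A $ i $ j"
  for A :: "'a::comm_semiring_1^'m^'n"
  by (simp add: matrix_matrix_mult_def mat_def if_distrib if_distribR sum.delta cong: if_cong)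

lemma mult_mat_nth: "(A ** mat c) $ i $ j = A $ i $ j * c"
  for A :: "'a::comm_semiring_1^'m^'n"
  by (simp add: matrix_matrix_mult_def mat_def if_distrib if_distribR sum.delta' cong: if_cong)

lemma mat_mult_mat: "mat c ** mat d = (mat (c * d) :: 'a::comm_semiring_1^'n^'n)"
  by (simp add: vec_eq_iff mat_mult_nth) (simp add: mat_def)

lemma mat_mult_commute: "mat c ** A = A ** mat c"
  for A :: "'a::comm_semiring_1^'n^'n"
  by (simp add: vec_eq_iff mat_mult_nth mult_mat_nth mult.commute)

lemma matrix_mul_mat_left_commute: "A ** (mat c ** B) = mat c ** (A ** B)"
  for A :: "'a::comm_semiring_1^'n^'n"
  by (metis mat_mult_commute matrix_mul_assoc)

lemma mat_mult_vector: "(mat c ** A) *v x = c *s (A *v x)"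
  for A :: "'a::comm_semiring_1^'m^'n"
  by (simp add: vec_eq_iff mat_mult_nth matrix_vector_mult_def sum_distrib_left mult.assoc)

lemma pcls_mat_mult:
  fixes A :: "'a::field^2^2"
  assumes "c \<noteq> 0"
  shows "pcls (mat c ** A) = pcls A"
proof -
  have "(\<exists>d. d \<noteq> 0 \<and> B = mat d ** (mat c ** A)) \<longleftrightarrow> (\<exists>d. d \<noteq> 0 \<and> B = mat d ** A)" for B
  proof
    assume "\<exists>d. d \<noteq> 0 \<and> B = mat d ** (mat c ** A)"
    then show "\<exists>d. d \<noteq> 0 \<and> B = mat d ** A"
      using assms by (metis matrix_mul_assoc mat_mult_mat no_zero_divisors)
  next
    assume "\<exists>d. d \<noteq> 0 \<and> B = mat d ** A"
    then obtain d where "d \<noteq> 0" "B = mat d ** A" by blast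
    with assms show "\<exists>d. d \<noteq> 0 \<and> B = mat d ** (mat c ** A)"
      by (intro exI[of _ "d / c"]) (simp add: matrix_mul_assoc mat_mult_mat)
  qed
  then show ?thesis
    unfolding pcls_def by simp
qed

lemma pcls_self: "det A \<noteq> 0 \<Longrightarrow> A \<in> pcls A"
  unfolding pcls_def by (auto intro: exI[of _ 1])

lemma frobm_mat_mult: "frobm (mat c ** A) = mat (c ^ 2) ** frobm A"
  for A :: "'a::field^2^2"
  by (simp add: vec_eq_iff frobm_def mat_mult_nth power_mult_distrib)

lemma frobP_pcls:
  fixes A :: "'a::field^2^2"
  assumes "det A \<noteq> 0"
  shows "frobP (pcls A) = pcls (frobm A)"
proof -
  have "(SOME B. B \<in> pcls A) \<in> pcls A"
    using pcls_self[OF assms] by (rule someI)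
  then obtain c where "c \<noteq> 0" "(SOME B. B \<in> pcls A) = mat c ** A"
    unfolding pcls_def by auto
  then show ?thesis
    unfolding frobP_def by (simp add: frobm_mat_mult pcls_mat_mult)
qed

lemma pcls_mem_stab_iff:
  fixes B :: "'a::field^2^2"
  assumes "det B \<noteq> 0"
  shows "pcls B \<in> stab w \<longleftrightarrow> (\<exists>c. B *v w = c *s w)"
proof
  assume "pcls B \<in> stab w"
  then obtain A c where A: "A \<in> pcls B" "A *v w = c *s w"
    unfolding stab_def by auto
  then obtain d where d: "d \<noteq> 0" "A = mat d ** B"
    unfolding pcls_def by auto
  have "d *s (B *v w) = c *s w"
    using A(2) by (simp add: d(2) mat_mult_vector)
  then have "B *v w = (c / d) *s w"
    using d(1) by (simp add: vec_eq_iff field_simps)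
  then show "\<exists>c. B *v w = c *s w" ..
next
  assume "\<exists>c. B *v w = c *s w"
  then show "pcls B \<in> stab w"
    unfolding stab_def PGL2_def gl2_def using assms pcls_self[OF assms] by blast
qed

lemma mpow_scalar_square:
  fixes B :: "'a::field^2^2"
  assumes "B ** B = mat s"
  shows "mpow B n = mat (s ^ (n div 2)) ** (if even n then mat 1 else B)"
proof (induction n)
  case 0
  then show ?case by simp
next
  case (Suc n)
  show ?case
  proof (cases "even n")
    case True
    then show ?thesis
      using Suc by (simp add: mat_mult_commute)
  next
    case False
    then have "Suc n div 2 = Suc (n div 2)" by presburger
    have "B ** (mat (s ^ (n div 2)) ** B) = mat (s ^ (n div 2)) ** (B ** B)"
      by (rule matrix_mul_mat_left_commute)
    with False Suc \<open>Suc n div 2 = Suc (n div 2)\<close> show ?thesis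
      by (simp add: assms mat_mult_mat mult.commute)
  qed
qed

lemma pcls_mpow_scalar_square:
  fixes B :: "'a::field^2^2"
  assumes "B ** B = mat s" "s \<noteq> 0"
  shows "pcls (mpow B n) = (if even n then pcls (mat 1) else pcls B)"
  using assms by (simp add: mpow_scalar_square[OF assms(1)] pcls_mat_mult)

lemma matrix_inv_scalar_square:
  fixes B :: "'a::field^2^2"
  assumes "B ** B = mat s" "s \<noteq> 0"
  shows "matrix_inv B = mat (1 / s) ** B"
proof -
  let ?B' = "mat (1 / s) ** B"
  have inverse: "B ** ?B' = mat 1 \<and> ?B' ** B = mat 1"
    using assms by (simp add: matrix_mul_mat_left_commute matrix_mul_assoc[symmetric] mat_mult_mat)
  have unique: "A = ?B'" if "B ** A = mat 1 \<and> A ** B = mat 1" for A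
  proof -
    have "A = A ** (B ** ?B')" using inverse by simp
    also have "\<dots> = (A ** B) ** ?B'" by (simp add: matrix_mul_assoc)
    finally show ?thesis using that by simp
  qed
  show ?thesis
    unfolding matrix_inv_def by (rule unique, rule someI, rule inverse)
qed

lemma cyc_scalar_square:
  fixes B :: "'a::field^2^2"
  assumes "B ** B = mat s" "s \<noteq> 0"
  shows "cyc B = {pcls (mat 1), pcls B}"
proof -
  let ?B' = "matrix_inv B"
  have B': "?B' = mat (1 / s) ** B"
    by (rule matrix_inv_scalar_square[OF assms])
  have "?B' ** ?B' = mat (1 / s)"
    using assms unfolding B'
    by (simp add: matrix_mul_mat_left_commute matrix_mul_assoc[symmetric] mat_mult_mat)
  moreover have "pcls ?B' = pcls B"
    using assms unfolding B' by (simp add: pcls_mat_mult)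
  ultimately have "pcls (mpow ?B' n) = (if even n then pcls (mat 1) else pcls B)" for n
    using assms(2) by (simp add: pcls_mpow_scalar_square)
  moreover have "pcls (mpow B n) = (if even n then pcls (mat 1) else pcls B)" for n
    by (rule pcls_mpow_scalar_square[OF assms])
  ultimately have classes: "{pcls (mpow B n) | n. True} = {pcls (mat 1), pcls B}"
      "{pcls (mpow ?B' n) | n. True} = {pcls (mat 1), pcls B}"
    by (auto intro: exI[of _ 0] exI[of _ 1])
  show ?thesis
    unfolding cyc_def classes by simp
qed

lemma girr_over_kI:
  assumes "X \<in> H" "\<And>w. w \<noteq> 0 \<Longrightarrow> X \<notin> stab w"
  shows "girr_over_k H"
  using assms unfolding girr_over_k_def kparabolic_def by blast

lemma not_gcr_over_kI:
  assumes "v \<noteq> 0" "H \<subseteq> stab v" "stab v \<noteq> PGL2" "X \<in> H"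
    and unique_line: "\<And>w. w \<noteq> 0 \<Longrightarrow> X \<in> stab w \<Longrightarrow> \<exists>c. w = c *s v"
  shows "\<not> gcr_over_k H"
proof
  assume "gcr_over_k H"
  moreover have "kparabolic (stab v)"
    unfolding kparabolic_def using assms(1) by blast
  ultimately obtain L where L: "klevi (stab v) L" "H \<subseteq> L"
    using assms(2) unfolding gcr_over_k_def by blast
  then obtain v' w where vw: "v' \<noteq> 0" "stab v = stab v'" "w \<noteq> 0"
    "\<forall>c. w \<noteq> c *s v'" "L = stab v \<inter> stab w"
    using assms(3) unfolding klevi_def by blast
  have "X \<in> stab v'" "X \<in> stab w"
    using assms(2,4) L(2) vw by auto
  then obtain c d where "v' = c *s v" "w = d *s v"
    using unique_line vw(1,3) by metis
  with vw(1) have "w = (d / c) *s v'"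
    by (auto simp: vec_eq_iff)
  with vw(4) show False by blast
qed

lemma antidiag_square: "mat2 0 b 1 0 ** mat2 0 b 1 0 = (mat b :: 'a::field^2^2)"
  by (simp add: mat22_simps)

lemma det_antidiag: "det (mat2 0 b 1 0 :: 'a::field^2^2) = - b"
  by (simp add: mat22_simps)

lemma frobm_antidiag: "frobm (mat2 0 b 1 0 :: 'a::field^2^2) = mat2 0 (b ^ 2) 1 0"
  by (simp add: vec_eq_iff forall_2 frobm_def mat2_def)

lemma frobm_mat_1: "frobm (mat 1 :: 'a::field^2^2) = mat 1"
  by (simp add: vec_eq_iff frobm_def mat_def)

lemma antidiag_eigenvector:
  fixes w :: "'a::field^2"
  assumes "mat2 0 b 1 0 *v w = c *s w" "w \<noteq> 0"
  shows "w $ 2 \<noteq> 0" "w $ 1 = c * w $ 2" "b = c ^ 2"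
proof -
  have eq: "b * w $ 2 = c * w $ 1" "w $ 1 = c * w $ 2"
    using assms(1) by (simp_all add: mat22_simps)
  then show "w $ 2 \<noteq> 0" "w $ 1 = c * w $ 2"
    using assms(2) by (auto simp: vec_eq_iff forall_2)
  with eq(1) show "b = c ^ 2"
    by (simp add: power2_eq_square)
qed

lemma antidiag_no_stable_line:
  fixes a :: "'a::field"
  assumes "\<forall>b. a \<noteq> b ^ 2" "w \<noteq> 0"
  shows "pcls (mat2 0 a 1 0) \<notin> stab w"
proof -
  have "a \<noteq> 0"
    using assms(1) by (metis zero_power2)
  then show ?thesis
    using assms antidiag_eigenvector(3)
    by (auto simp: pcls_mem_stab_iff det_antidiag)
qed

lemma power2_eq_iff_CHAR_2:
  fixes x y :: "'a::field"
  assumes "CHAR('a) = 2"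
  shows "x ^ 2 = y ^ 2 \<longleftrightarrow> x = y"
  using uminus_CHAR_2[OF assms] by (auto simp: power2_eq_iff)

lemma antidiag_square_stable_line_iff:
  fixes a :: "'a::field"
  assumes "CHAR('a) = 2" "a \<noteq> 0" "w \<noteq> 0"
  shows "pcls (mat2 0 (a ^ 2) 1 0) \<in> stab w \<longleftrightarrow> (\<exists>c. w = c *s vector [a, 1])"
proof -
  have "(\<exists>c. mat2 0 (a ^ 2) 1 0 *v w = c *s w) \<longleftrightarrow> (\<exists>c. w = c *s vector [a, 1])"
  proof
    assume "\<exists>c. mat2 0 (a ^ 2) 1 0 *v w = c *s w"
    then obtain c where "w $ 1 = c * w $ 2" "a ^ 2 = c ^ 2"
      using antidiag_eigenvector[OF _ assms(3)] by metis
    then have "w = w $ 2 *s vector [a, 1]"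
      using power2_eq_iff_CHAR_2[OF assms(1)] by (auto simp: vec_eq_iff forall_2 mult.commute)
    then show "\<exists>c. w = c *s vector [a, 1]" ..
  next
    assume "\<exists>c. w = c *s vector [a, 1]"
    then have "mat2 0 (a ^ 2) 1 0 *v w = a *s w"
      by (auto simp: mat22_simps power2_eq_square)
    then show "\<exists>c. mat2 0 (a ^ 2) 1 0 *v w = c *s w" ..
  qed
  then show ?thesis
    using assms(2) by (simp add: pcls_mem_stab_iff det_antidiag)
qed

theorem mainTheorem10:
  fixes a :: "'a::field"
  assumes char2: "CHAR('a) = 2"
    and nonperfect: "\<exists>x::'a. \<forall>y. x \<noteq> y ^ 2"
    and a_nonsq: "\<forall>b::'a. a \<noteq> b ^ 2"
  shows "girr_over_k (cyc (mat2 0 a 1 0))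
       \<and> frobP ` (cyc (mat2 0 a 1 0)) = cyc (mat2 0 (a ^ 2) 1 0)
       \<and> \<not> gcr_over_k (frobP ` (cyc (mat2 0 a 1 0)))"
proof -
  have a0: "a \<noteq> 0"
    using a_nonsq by (metis zero_power2)
  have cyc: "cyc (mat2 0 a 1 0) = {pcls (mat 1), pcls (mat2 0 a 1 0)}"
    "cyc (mat2 0 (a ^ 2) 1 0) = {pcls (mat 1), pcls (mat2 0 (a ^ 2) 1 0)}"
    using a0 by (simp_all add: cyc_scalar_square antidiag_square)
  have image: "frobP ` cyc (mat2 0 a 1 0) = cyc (mat2 0 (a ^ 2) 1 0)"
    using a0 by (simp add: cyc frobP_pcls det_antidiag frobm_antidiag frobm_mat_1)
  let ?v = "vector [a, 1] :: 'a^2"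
  have v0: "?v \<noteq> 0"
    by (metis vector_2(2) zero_index zero_neq_one)
  have "pcls (mat 1) \<in> stab ?v"
    by (simp add: pcls_mem_stab_iff exI[of _ 1])
  moreover have "pcls (mat2 0 (a ^ 2) 1 0) \<in> stab ?v"
    by (simp add: antidiag_square_stable_line_iff[OF char2 a0 v0]) (metis vector_smult_lid)
  moreover have "pcls (mat2 0 a 1 0) \<in> PGL2 - stab ?v"
    using a0 antidiag_no_stable_line[OF a_nonsq v0]
    by (auto simp: PGL2_def gl2_def det_antidiag)
  ultimately have "\<not> gcr_over_k (cyc (mat2 0 (a ^ 2) 1 0))"
    using v0 antidiag_square_stable_line_iff[OF char2 a0]
    by (intro not_gcr_over_kI[of ?v _ "pcls (mat2 0 (a ^ 2) 1 0)"]) (auto simp: cyc)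
  moreover have "girr_over_k (cyc (mat2 0 a 1 0))"
    using antidiag_no_stable_line[OF a_nonsq]
    by (intro girr_over_kI[of "pcls (mat2 0 a 1 0)"]) (auto simp: cyc)
  ultimately show ?thesis
    using image by simp
qed

end
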